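(* Let $f_1,f_2$ be strongly hyperbolic functions and let $p_1,p_2,p_3\in\mathcal{P}$ be three points in admissible position. Then at least one element of $\mathcal{C}^-(f_1,f_2)$ contains $p_1,p_2,p_3$.
   Context: Identify $\mathbb{S}^1$ with $\mathbb{R}\cup\{\infty\}$, $\mathcal{P}=\mathbb{S}^1\times\mathbb{S}^1$, $\mathbb{R}^+=(0,\infty)$. A function $f:\mathbb{R}^+\to\mathbb{R}^+$ is strongly hyperbolic if: (1) $\lim_{x\to0+}f(x)=+\infty$, $\lim_{x\to+\infty}f(x)=0$; (2) $f$ strictly convex; (3) $\lim_{x\to+\infty}f(x+b)/f(x)=1$ for each $b\in\mathbb{R}$; (4) $f$ differentiable; (5) $\ln|f'|$ strictly convex. For $a>0$, $b,c\in\mathbb{R}$: $f_{a,b,c}(x)=af_1(x+b)+c$ for $x>-b$, $f_{a,b,c}(x)=-af_2(-x-b)+c$ for $x<-b$; $\overline{f_{a,b,c}}=\{(x,f_{a,b,c}(x)):x\ne-b\}\cup\{(-b,\infty),(\infty,c)\}$; $\overline{l_{s,t}}=\{(x,sx+t):x\in\mathbb{R}\}\cup\{(\infty,\infty)\}$; $\mathcal{C}^-(f_1,f_2)=\{\overline{f_{a,b,c}}:a>0,b,c\in\mathbb{R}\}\cup\{\overline{l_{s,t}}:s<0,t\in\mathbb{R}\}$. Three points are in admissible position if they are all contained in one set of the form $\{(x,sx+t):x\in\mathbb{R}\}\cup\{(\infty,\infty)\}$ with $s<0$, $t\in\mathbb{R}$, or of the form $\{(x,y)\in\mathbb{R}^2:(x-b)(y-c)=a\}\cup\{(\infty,c),(b,\infty)\}$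 with $a>0$, $b,c\in\mathbb{R}$ (the orientation-reversing circles of the classical flat Minkowski plane). *)

theory Defs
  imports "HOL-Analysis.Analysis"
begin

text \<open>The circle S^1 identified with R together with a point at infinity.\<close>
datatype ext = Fin real | Infty

type_synonym point = "ext \<times> ext"

definition strictly_convex_on :: "real set \<Rightarrow> (real \<Rightarrow> real) \<Rightarrow> bool" where
  "strictly_convex_on S f \<longleftrightarrow> convex S \<and>
     (\<forall>x\<in>S. \<forall>y\<in>S. \<forall>u::real. x \<noteq> y \<and> 0 < u \<and> u < 1 \<longrightarrow>
        f (u * x + (1 - u) * y) < u * f x + (1 - u) * f y)"

text \<open>Strongly hyperbolic functions f : R+ -> R+ (only values on (0,inf) matter).\<close>
definition strongly_hyperbolic :: "(real \<Rightarrow> real) \<Rightarrow> bool" where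
  "strongly_hyperbolic f \<longleftrightarrow>
     (\<forall>x>0. f x > 0) \<and>
     filterlim f at_top (at_right 0) \<and>
     (f \<longlongrightarrow> 0) at_top \<and>
     strictly_convex_on {0<..} f \<and>
     (\<forall>b::real. ((\<lambda>x. f (x + b) / f x) \<longlongrightarrow> 1) at_top) \<and>
     (\<forall>x>0. f differentiable (at x)) \<and>
     strictly_convex_on {0<..} (\<lambda>x. ln \<bar>deriv f x\<bar>)"

definition f_abc :: "(real \<Rightarrow> real) \<Rightarrow> (real \<Rightarrow> real) \<Rightarrow> real \<Rightarrow> real \<Rightarrow> real \<Rightarrow> real \<Rightarrow> real" where
  "f_abc f1 f2 a b c x =
     (if x > - b then a * f1 (x + b) + c else - a * f2 (- x - b) + c)"

definition f_abc_closure :: "(real \<Rightarrow> real) \<Rightarrow> (real \<Rightarrow> real) \<Rightarrow> real \<Rightarrow> real \<Rightarrow> real \<Rightarrow> point set" where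
  "f_abc_closure f1 f2 a b c =
     {(Fin x, Fin (f_abc f1 f2 a b c x)) | x. x \<noteq> - b} \<union> {(Fin (- b), Infty), (Infty, Fin c)}"

definition line_closure :: "real \<Rightarrow> real \<Rightarrow> point set" where
  "line_closure s t = {(Fin x, Fin (s * x + t)) | x. True} \<union> {(Infty, Infty)}"

definition C_minus :: "(real \<Rightarrow> real) \<Rightarrow> (real \<Rightarrow> real) \<Rightarrow> point set set" where
  "C_minus f1 f2 =
     {f_abc_closure f1 f2 a b c | a b c. a > 0} \<union> {line_closure s t | s t. s < 0}"

text \<open>Orientation-reversing circles of the classical flat Minkowski plane.\<close>
definition hyperbola_closure :: "real \<Rightarrow> real \<Rightarrow> real \<Rightarrow> point set" where
  "hyperbola_closure a b c =
     {(Fin x, Fin y) | x y. (x - b) * (y - c) = a} \<union> {(Infty, Fin c), (Fin b, Infty)}"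

definition admissible_position :: "point \<Rightarrow> point \<Rightarrow> point \<Rightarrow> bool" where
  "admissible_position p1 p2 p3 \<longleftrightarrow>
     (\<exists>s t. s < 0 \<and> {p1, p2, p3} \<subseteq> line_closure s t) \<or>
     (\<exists>a b c. a > 0 \<and> {p1, p2, p3} \<subseteq> hyperbola_closure a b c)"

end

theory Submission
  imports Defs
begin

(* Lines of negative slope already belong to C^-(f1,f2), so the work is to pass a curve
   f_{a,b,c} through three points of a hyperbola (x - B)(y - C) = A with A > 0.  A point at
   infinity of the hyperbola fixes a parameter of the curve (the pole -b = B, resp. the
   asymptote c = C); the parameters entering linearly are then solved for directly and the
   position of the pole by the intermediate value theorem.  The half-turn (x,y) -> (-x,-y)
   maps C^-(f1,f2) onto C^-(f2,f1) and hyperbolas to hyperbolas, which halves the number of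
   configurations needing a construction.  The delicate configuration is three points on one
   branch: the increments of f over the gaps between the points must then be in the same
   ratio as those of the hyperbola, and that every ratio beyond the trivial bound is attained
   rests on the condition f(x + b) / f(x) -> 1. *)

section \<open>The half-turn and concyclic point sets\<close>

fun ext_neg :: "ext \<Rightarrow> ext" where
  "ext_neg (Fin x) = Fin (- x)"
| "ext_neg Infty = Infty"

definition point_reflection :: "point \<Rightarrow> point" where
  "point_reflection p = (ext_neg (fst p), ext_neg (snd p))"

lemma ext_neg_ext_neg [simp]: "ext_neg (ext_neg z) = z"
  by (cases z) simp_all

lemma point_reflection_point_reflection [simp]: "point_reflection (point_reflection p) = p"
  by (simp add: point_reflection_def)

lemma point_reflection_simps [simp]:
  "point_reflection (Fin x, Fin y) = (Fin (- x), Fin (- y))"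
  "point_reflection (Fin x, Infty) = (Fin (- x), Infty)"
  "point_reflection (Infty, Fin y) = (Infty, Fin (- y))"
  "point_reflection (Infty, Infty) = (Infty, Infty)"
  by (simp_all add: point_reflection_def)

lemma mem_image_point_reflection: "p \<in> point_reflection ` S \<longleftrightarrow> point_reflection p \<in> S"
  by (metis image_iff point_reflection_point_reflection)

lemma f_abc_closure_iff [simp]:
  "(Fin x, Fin y) \<in> f_abc_closure f1 f2 a b c \<longleftrightarrow> x \<noteq> - b \<and> y = f_abc f1 f2 a b c x"
  "(Fin x, Infty) \<in> f_abc_closure f1 f2 a b c \<longleftrightarrow> x = - b"
  "(Infty, Fin y) \<in> f_abc_closure f1 f2 a b c \<longleftrightarrow> y = c"
  "(Infty, Infty) \<notin> f_abc_closure f1 f2 a b c"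
  by (auto simp: f_abc_closure_def)

lemma line_closure_iff [simp]:
  "(Fin x, Fin y) \<in> line_closure s t \<longleftrightarrow> y = s * x + t"
  "(Fin x, Infty) \<notin> line_closure s t"
  "(Infty, Fin y) \<notin> line_closure s t"
  "(Infty, Infty) \<in> line_closure s t"
  by (auto simp: line_closure_def)

lemma hyperbola_closure_iff [simp]:
  "(Fin x, Fin y) \<in> hyperbola_closure a b c \<longleftrightarrow> (x - b) * (y - c) = a"
  "(Fin x, Infty) \<in> hyperbola_closure a b c \<longleftrightarrow> x = b"
  "(Infty, Fin y) \<in> hyperbola_closure a b c \<longleftrightarrow> y = c"
  "(Infty, Infty) \<notin> hyperbola_closure a b c"
  by (auto simp: hyperbola_closure_def)

lemma all_point_cases:
  "(\<forall>p. P p) \<longleftrightarrow> (\<forall>x y. P (Fin x, Fin y)) \<and> (\<forall>x. P (Fin x, Infty)) \<and> (\<forall>y. P (Infty, Fin y)) \<and> P (Infty, Infty)"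
  by (metis ext.exhaust prod.exhaust)

lemma image_point_reflection_f_abc_closure:
  "point_reflection ` f_abc_closure f1 f2 a b c = f_abc_closure f2 f1 a (- b) (- c)"
  unfolding set_eq_iff mem_image_point_reflection all_point_cases
  by (auto simp: f_abc_def)

lemma image_point_reflection_line_closure:
  "point_reflection ` line_closure s t = line_closure s (- t)"
  unfolding set_eq_iff mem_image_point_reflection all_point_cases by auto

definition concyclic :: "(real \<Rightarrow> real) \<Rightarrow> (real \<Rightarrow> real) \<Rightarrow> point set \<Rightarrow> bool" where
  "concyclic f1 f2 S \<longleftrightarrow> (\<exists>C\<in>C_minus f1 f2. S \<subseteq> C)"

lemma concyclic_point_reflection:
  assumes "concyclic f2 f1 (point_reflection ` S)"
  shows "concyclic f1 f2 S"
proof -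
  obtain C where C: "C \<in> C_minus f2 f1" "point_reflection ` S \<subseteq> C"
    using assms by (auto simp: concyclic_def)
  have "point_reflection ` C \<in> C_minus f1 f2"
    using C(1) unfolding C_minus_def
    by (auto simp: image_point_reflection_f_abc_closure image_point_reflection_line_closure)
      blast+
  moreover have "S \<subseteq> point_reflection ` C"
    using C(2) by (auto simp: mem_image_point_reflection)
  ultimately show ?thesis
    by (auto simp: concyclic_def)
qed

lemma concyclic_f_abc_closure: "0 < a \<Longrightarrow> S \<subseteq> f_abc_closure f1 f2 a b c \<Longrightarrow> concyclic f1 f2 S"
  unfolding concyclic_def C_minus_def by blast

lemma f_abc_right_of_pole: "v < x \<Longrightarrow> f_abc f1 f2 a (- v) c x = a * f1 (x - v) + c"
  by (simp add: f_abc_def)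

lemma f_abc_left_of_pole: "x < v \<Longrightarrow> f_abc f1 f2 a (- v) c x = c - a * f2 (v - x)"
  by (simp add: f_abc_def)

lemma f_abc_affine: "f_abc f1 f2 a b c x = a * f_abc f1 f2 1 b 0 x + c"
  by (simp add: f_abc_def)

section \<open>Strongly hyperbolic functions\<close>

lemma strongly_hyperbolic_pos: "strongly_hyperbolic f \<Longrightarrow> 0 < x \<Longrightarrow> 0 < f x"
  by (simp add: strongly_hyperbolic_def)

lemma strongly_hyperbolic_continuous_on: "strongly_hyperbolic f \<Longrightarrow> continuous_on {0<..} f"
  unfolding strongly_hyperbolic_def
  by (meson continuous_at_imp_continuous_on differentiable_imp_continuous_within greaterThan_iff)

lemma continuous_on_strongly_hyperbolic_comp:
  assumes "strongly_hyperbolic f" "continuous_on S g" "g ` S \<subseteq> {0<..}"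
  shows "continuous_on S (\<lambda>u. f (g u))"
  using continuous_on_compose2[OF strongly_hyperbolic_continuous_on[OF assms(1)] assms(2,3)] .

lemma strongly_hyperbolic_convex_on:
  assumes "strongly_hyperbolic f"
  shows "convex_on {0<..} f"
proof (rule convex_onI)
  fix t x y :: real
  assume t: "0 < t" "t < 1" and xy: "x \<in> {0<..}" "y \<in> {0<..}"
  show "f ((1 - t) *\<^sub>R x + t *\<^sub>R y) \<le> (1 - t) * f x + t * f y"
  proof (cases "x = y")
    case False
    have "strictly_convex_on {0<..} f"
      using assms by (simp add: strongly_hyperbolic_def)
    then have "f ((1 - t) * x + (1 - (1 - t)) * y) < (1 - t) * f x + (1 - (1 - t)) * f y"
      using False t xy unfolding strictly_convex_on_def by (metis diff_gt_0_iff_gt diff_less_eq less_add_same_cancel1)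
    then show ?thesis
      by simp
  qed (simp add: algebra_simps)
qed (simp add: convex_real_interval)

lemma strongly_hyperbolic_slope_mono:
  assumes sh: "strongly_hyperbolic f" and "0 < a" "a < b" "c < e" "a \<le> c" "b \<le> e"
  shows "(f b - f a) / (b - a) \<le> (f e - f c) / (e - c)"
proof -
  have cvx: "convex_on {0<..} f"
    using sh by (rule strongly_hyperbolic_convex_on)
  have slope_sym: "(f x - f y) / (x - y) = (f y - f x) / (y - x)" for x y :: real
    by (metis minus_diff_eq minus_divide_divide)
  have "(f b - f a) / (b - a) \<le> (f e - f a) / (e - a)"
    using convex_on_slope_le(1)[OF cvx, of a e b] assms by (cases "b = e") (auto simp: slope_sym)
  also have "\<dots> \<le> (f e - f c) / (e - c)"
    using convex_on_slope_le(2)[OF cvx, of a e c] assms by (cases "a = c") (auto simp: slope_sym)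
  finally show ?thesis .
qed

lemma strongly_hyperbolic_decreasing:
  assumes sh: "strongly_hyperbolic f" and "0 < x" "x < y"
  shows "f y < f x"
proof (rule ccontr)
  assume "\<not> f y < f x"
  then have "0 \<le> (f y - f x) / (y - x)"
    using assms by simp
  then have above: "f y \<le> f z" if "y < z" for z
  proof -
    have "0 \<le> (f z - f y) / (z - y)"
      using strongly_hyperbolic_slope_mono[OF sh, of x y y z] assms that \<open>0 \<le> _\<close> by linarith
    then show ?thesis
      using that by (simp add: zero_le_divide_iff)
  qed
  have "(f \<longlongrightarrow> 0) at_top"
    using sh by (simp add: strongly_hyperbolic_def)
  then have "\<forall>\<^sub>F z in at_top. f z < f y"
    using strongly_hyperbolic_pos[OF sh] assms by (intro order_tendstoD(2)) auto
  then obtain z where "y < z" "f z < f y"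
    by (metis eventually_at_top_linorder gt_ex less_le_not_le nle_le)
  with above show False
    by fastforce
qed

lemma strongly_hyperbolic_large_near_zero:
  assumes "strongly_hyperbolic f" "0 < \<epsilon>"
  shows "\<exists>u. 0 < u \<and> u < \<epsilon> \<and> M < f u"
proof -
  have "filterlim f at_top (at_right 0)"
    using assms(1) by (simp add: strongly_hyperbolic_def)
  then have "\<forall>\<^sub>F u in at_right 0. M < f u"
    by (simp add: filterlim_at_top_dense)
  then obtain b where "0 < b" "\<forall>u>0. u < b \<longrightarrow> M < f u"
    by (auto simp: eventually_at_right_field)
  then show ?thesis
    using assms(2) by (intro exI[of _ "min b \<epsilon> / 2"]) auto
qed

lemma strongly_hyperbolic_shift_ratio:
  assumes sh: "strongly_hyperbolic f" and "\<theta> < 1"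
  shows "\<exists>u>0. \<theta> * f u < f (u + d)"
proof -
  have "((\<lambda>x. f (x + d) / f x) \<longlongrightarrow> 1) at_top"
    using sh by (simp add: strongly_hyperbolic_def)
  then have "\<forall>\<^sub>F x in at_top. \<theta> < f (x + d) / f x \<and> 0 < x"
    using assms(2) by (intro eventually_conj order_tendstoD(1) eventually_gt_at_top)
  then obtain u where "0 < u" "\<theta> < f (u + d) / f u"
    using eventually_happens' trivial_limit_at_top_linorder by blast
  then show ?thesis
    using strongly_hyperbolic_pos[OF sh] by (auto simp: field_simps)
qed

lemma geometric_tail_bound:
  fixes f D :: "real \<Rightarrow> real"
  assumes lim: "(f \<longlongrightarrow> 0) at_top" and d: "0 < d" and \<rho>: "1 < \<rho>" and K: "0 \<le> K"
    and D_nonneg: "\<And>u. 0 < u \<Longrightarrow> 0 \<le> D u"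
    and D_decay: "\<And>u. 0 < u \<Longrightarrow> \<rho> * D (u + d) \<le> D u"
    and step: "\<And>u. 0 < u \<Longrightarrow> f u - f (u + d) \<le> K * D u"
    and u: "0 < u"
  shows "f (u + d) \<le> K / (\<rho> - 1) * D u"
proof -
  define M where "M = K / (\<rho> - 1)"
  have M: "0 \<le> M" "K + M = M * \<rho>"
    using \<rho> K by (auto simp: M_def field_simps)
  have partial: "f (u + d) - f (u + real (Suc n) * d) \<le> M * D u" if "0 < u" for n u
    using that
  proof (induction n arbitrary: u)
    case 0
    then show ?case
      using M D_nonneg by simp
  next
    case (Suc n)
    have ud: "0 < u + d"
      using Suc.prems d by simp
    have "f (u + d) - f (u + real (Suc (Suc n)) * d)
        = (f (u + d) - f (u + d + d)) + (f (u + d + d) - f (u + d + real (Suc n) * d))"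
      by (simp add: algebra_simps)
    also have "\<dots> \<le> K * D (u + d) + M * D (u + d)"
      using step[OF ud] Suc.IH[OF ud] by simp
    also have "\<dots> = M * (\<rho> * D (u + d))"
      by (metis M(2) distrib_right mult.assoc)
    also have "\<dots> \<le> M * D u"
      using D_decay[OF Suc.prems] M(1) by (rule mult_left_mono)
    finally show ?case .
  qed
  have "filterlim (\<lambda>n. u + real (Suc n) * d) at_top sequentially"
    by (intro filterlim_tendsto_add_at_top[OF tendsto_const] filterlim_at_top_mult_tendsto_pos[OF tendsto_const d]
        filterlim_compose[OF filterlim_real_sequentially filterlim_Suc])
  then have "((\<lambda>n. f (u + d) - f (u + real (Suc n) * d)) \<longlonglongrightarrow> f (u + d) - 0)"
    by (intro tendsto_diff tendsto_const filterlim_compose[OF lim])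
  then show ?thesis
    using partial[OF u] unfolding M_def by (intro LIMSEQ_le_const2) auto
qed

lemma strongly_hyperbolic_increment_decay:
  assumes sh: "strongly_hyperbolic f" and d1: "0 < d1" and d2: "0 < d2" and R: "0 < R"
    and H: "\<And>u. 0 < u \<Longrightarrow> R * (f (u + d1) - f (u + d1 + d2)) \<le> f u - f (u + d1)"
    and u: "0 < u"
  shows "R * d2 / d1 * (f (u + (d1 + d2)) - f (u + (d1 + d2) + d1)) \<le> f u - f (u + d1)"
proof -
  define d where "d = d1 + d2"
  have "(f (u + d) - f (u + d1)) / ((u + d) - (u + d1))
      \<le> (f (u + d + d1) - f (u + d)) / ((u + d + d1) - (u + d))"
    using u d1 d2 by (intro strongly_hyperbolic_slope_mono[OF sh]) (auto simp: d_def)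
  then have "(f (u + d) - f (u + d + d1)) * d2 \<le> (f (u + d1) - f (u + d1 + d2)) * d1"
    using d1 d2 by (simp add: d_def field_simps)
  then have "R * ((f (u + d) - f (u + d + d1)) * d2) \<le> R * ((f (u + d1) - f (u + d1 + d2)) * d1)"
    using R by (intro mult_left_mono) auto
  then have "R * d2 * (f (u + d) - f (u + d + d1)) \<le> R * (f (u + d1) - f (u + d1 + d2)) * d1"
    by (simp add: mult_ac)
  also have "\<dots> \<le> (f u - f (u + d1)) * d1"
    using H[OF u] d1 by simp
  finally show ?thesis
    using d1 by (simp add: d_def field_simps)
qed

(* Otherwise the increments over steps of length d1 decay geometrically along u + k (d1 + d2),
   which forces f (u + d1 + d2) <= M (f u - f (u + d1 + d2)) for a fixed M: exponential decay of f,
   contradicting f (x + b) / f x -> 1. *)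
lemma strongly_hyperbolic_increment_ratio:
  assumes sh: "strongly_hyperbolic f" and d1: "0 < d1" and d2: "0 < d2" and R: "d1 < R * d2"
  shows "\<exists>u>0. f u - f (u + d1) < R * (f (u + d1) - f (u + d1 + d2))"
proof (rule ccontr)
  assume "\<not> ?thesis"
  then have H: "R * (f (u + d1) - f (u + d1 + d2)) \<le> f u - f (u + d1)" if "0 < u" for u
    using that by force
  define d \<rho> K D where "d = d1 + d2" and "\<rho> = R * d2 / d1" and "K = 1 + 1 / R"
    and "D u = f u - f (u + d1)" for u
  have R_pos: "0 < R"
    using R d1 d2 by (smt (verit) mult_nonpos_nonneg)
  have \<rho>: "1 < \<rho>"
    using R d1 by (simp add: \<rho>_def field_simps)
  have K: "0 \<le> K"
    using R_pos by (simp add: K_def add_nonneg_nonneg)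
  have dec: "f y < f x" if "0 < x" "x < y" for x y
    using strongly_hyperbolic_decreasing[OF sh that] .
  have D_nonneg: "0 \<le> D u" if "0 < u" for u
    using dec[of u "u + d1"] that d1 by (simp add: D_def)
  have D_decay: "\<rho> * D (u + d) \<le> D u" if "0 < u" for u
    using strongly_hyperbolic_increment_decay[OF sh d1 d2 R_pos H that] by (simp add: \<rho>_def D_def d_def)
  have step: "f u - f (u + d) \<le> K * D u" if u: "0 < u" for u
    using H[OF u] R_pos by (simp add: K_def D_def d_def field_simps)
  have lim: "(f \<longlongrightarrow> 0) at_top"
    using sh by (simp add: strongly_hyperbolic_def)
  define M where "M = K / (\<rho> - 1)"
  have M: "0 \<le> M"
    using K \<rho> by (simp add: M_def)
  have tail: "f (u + d) \<le> M * (f u - f (u + d))" if u: "0 < u" for u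
  proof -
    have "f (u + d) \<le> M * D u"
      unfolding M_def using d1 d2 \<rho> K D_nonneg D_decay step u
      by (intro geometric_tail_bound[OF lim]) (auto simp: d_def)
    also have "\<dots> \<le> M * (f u - f (u + d))"
      using dec[of "u + d1" "u + d"] u d1 d2 M by (intro mult_left_mono) (auto simp: D_def d_def)
    finally show ?thesis .
  qed
  obtain u where u: "0 < u" "M / (1 + M) * f u < f (u + d)"
    using strongly_hyperbolic_shift_ratio[OF sh, of "M / (1 + M)"] M by auto
  then show False
    using tail[OF u(1)] M by (simp add: field_simps)
qed

lemma strongly_hyperbolic_shift_ratio_eq:
  assumes sh: "strongly_hyperbolic f" and d: "0 < d" and r: "1 < r"
  shows "\<exists>u>0. f u = r * f (u + d)"
proof -
  define G where "G u = f u - r * f (u + d)" for u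
  obtain u1 where u1: "0 < u1" "1 / r * f u1 < f (u1 + d)"
    using strongly_hyperbolic_shift_ratio[OF sh, of "1 / r"] r by auto
  obtain u0 where u0: "0 < u0" "u0 < u1" "r * f d < f u0"
    using strongly_hyperbolic_large_near_zero[OF sh u1(1)] by blast
  have "G u1 \<le> 0"
    using u1(2) r by (simp add: G_def field_simps)
  moreover have "0 \<le> G u0"
  proof -
    have "f (u0 + d) < f d"
      using strongly_hyperbolic_decreasing[OF sh d, of "u0 + d"] u0 by simp
    then show ?thesis
      using u0(3) r by (simp add: G_def) (smt (verit) mult_strict_left_mono)
  qed
  moreover have "continuous_on {u0..u1} G"
    unfolding G_def using u0 d
    by (intro continuous_intros continuous_on_strongly_hyperbolic_comp[OF sh]) auto
  ultimately obtain u where "u0 \<le> u" "G u = 0"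
    using IVT2'[of G u1 0 u0] u0 by auto
  then show ?thesis
    using u0 by (intro exI[of _ u]) (auto simp: G_def)
qed

lemma strongly_hyperbolic_increment_ratio_eq:
  assumes sh: "strongly_hyperbolic f" and d1: "0 < d1" and d2: "0 < d2" and R: "d1 < R * d2"
  shows "\<exists>u>0. f u - f (u + d1) = R * (f (u + d1) - f (u + d1 + d2))"
proof -
  define G where "G u = f u - f (u + d1) - R * (f (u + d1) - f (u + d1 + d2))" for u
  obtain u1 where u1: "0 < u1" "G u1 < 0"
    using strongly_hyperbolic_increment_ratio[OF sh d1 d2 R] by (auto simp: G_def)
  define K where "K = f d1 - f (d1 + d2)"
  obtain u0 where u0: "0 < u0" "u0 < u1" "f d1 + R * K < f u0"
    using strongly_hyperbolic_large_near_zero[OF sh u1(1)] by blast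
  have "0 \<le> G u0"
  proof -
    have "(f (d1 + d2) - f d1) / ((d1 + d2) - d1)
        \<le> (f (u0 + d1 + d2) - f (u0 + d1)) / ((u0 + d1 + d2) - (u0 + d1))"
      using d1 d2 u0 by (intro strongly_hyperbolic_slope_mono[OF sh]) auto
    then have "f (u0 + d1) - f (u0 + d1 + d2) \<le> K"
      using d2 by (simp add: K_def divide_le_cancel)
    moreover have "0 < R"
      using R d1 d2 by (smt (verit) mult_nonpos_nonneg)
    ultimately have "R * (f (u0 + d1) - f (u0 + d1 + d2)) \<le> R * K"
      by simp
    moreover have "f (u0 + d1) < f d1"
      using strongly_hyperbolic_decreasing[OF sh d1, of "u0 + d1"] u0 by simp
    ultimately show ?thesis
      using u0(3) by (simp add: G_def)
  qed
  moreover have "continuous_on {u0..u1} G"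
    unfolding G_def using u0 d1 d2
    by (intro continuous_intros continuous_on_strongly_hyperbolic_comp[OF sh]) auto
  ultimately obtain u where "u0 \<le> u" "G u = 0"
    using IVT2'[of G u1 0 u0] u0 u1 by auto
  then show ?thesis
    using u0 by (intro exI[of _ u]) (auto simp: G_def)
qed

lemma strongly_hyperbolic_two_branch_eq:
  assumes sh1: "strongly_hyperbolic f1" and sh2: "strongly_hyperbolic f2"
    and l: "0 < l" and \<delta>: "0 < \<delta>" and \<alpha>: "0 < \<alpha>" and \<beta>: "0 \<le> \<beta>" and \<gamma>: "0 < \<gamma>"
  shows "\<exists>t. 0 < t \<and> t < l \<and> \<alpha> * f2 t - \<beta> * f2 (t + \<delta>) = \<gamma> * f1 (l - t)"
proof -
  define G where "G t = \<alpha> * f2 t - \<beta> * f2 (t + \<delta>) - \<gamma> * f1 (l - t)" for t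
  define h where "h = l / 2"
  have h: "0 < h" "h < l"
    using l by (simp_all add: h_def)
  obtain t0 where t0: "0 < t0" "t0 < h" "(\<beta> * f2 \<delta> + \<gamma> * f1 h) / \<alpha> < f2 t0"
    using strongly_hyperbolic_large_near_zero[OF sh2 h(1)] by blast
  obtain s where s: "0 < s" "s < h" "\<alpha> * f2 h / \<gamma> < f1 s"
    using strongly_hyperbolic_large_near_zero[OF sh1 h(1)] by blast
  define t1 where "t1 = l - s"
  have "0 \<le> G t0"
  proof -
    have "\<beta> * f2 (t0 + \<delta>) \<le> \<beta> * f2 \<delta>"
      using strongly_hyperbolic_decreasing[OF sh2 \<delta>, of "t0 + \<delta>"] t0 \<beta> by (simp add: mult_left_mono)
    moreover have "\<gamma> * f1 (l - t0) \<le> \<gamma> * f1 h"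
      using strongly_hyperbolic_decreasing[OF sh1 h(1), of "l - t0"] t0 \<gamma> by (simp add: h_def)
    ultimately show ?thesis
      using t0(3) \<alpha> by (simp add: G_def field_simps)
  qed
  moreover have "G t1 \<le> 0"
  proof -
    have "\<alpha> * f2 t1 \<le> \<alpha> * f2 h"
      using strongly_hyperbolic_decreasing[OF sh2 h(1), of t1] s \<alpha> by (simp add: t1_def h_def)
    moreover have "0 \<le> \<beta> * f2 (t1 + \<delta>)"
      using strongly_hyperbolic_pos[OF sh2, of "t1 + \<delta>"] s h \<beta> \<delta> by (simp add: t1_def)
    ultimately show ?thesis
      using s(3) \<gamma> by (simp add: G_def t1_def field_simps)
  qed
  moreover have "continuous_on {t0..t1} G"
    unfolding G_def using t0 s \<delta>
    by (intro continuous_intros continuous_on_strongly_hyperbolic_comp[OF sh1]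
        continuous_on_strongly_hyperbolic_comp[OF sh2]) (auto simp: t1_def)
  moreover have "t0 \<le> t1"
    using t0 s by (simp add: t1_def h_def)
  ultimately obtain t where "t0 \<le> t" "t \<le> t1" "G t = 0"
    using IVT2'[of G t1 0 t0] by auto
  then show ?thesis
    using t0 s by (intro exI[of _ t]) (auto simp: G_def t1_def)
qed

section \<open>Curves of C^- through prescribed points\<close>

lemma f_abc_decreasing:
  assumes sh1: "strongly_hyperbolic f1" and sh2: "strongly_hyperbolic f2"
    and a: "0 < a" and x: "x < x'" and side: "- b < x \<or> x' < - b"
  shows "f_abc f1 f2 a b c x' < f_abc f1 f2 a b c x"
  using side
proof
  assume "- b < x"
  then have "f1 (x' + b) < f1 (x + b)"
    using strongly_hyperbolic_decreasing[OF sh1, of "x + b" "x' + b"] x by simp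
  then show ?thesis
    using \<open>- b < x\<close> x a by (simp add: f_abc_def)
next
  assume "x' < - b"
  then have "f2 (- x - b) < f2 (- x' - b)"
    using strongly_hyperbolic_decreasing[OF sh2, of "- x' - b" "- x - b"] x by simp
  then show ?thesis
    using \<open>x' < - b\<close> x a by (simp add: f_abc_def)
qed

lemma f_abc_gt_asymptote: "strongly_hyperbolic f1 \<Longrightarrow> 0 < a \<Longrightarrow> - b < x \<Longrightarrow> c < f_abc f1 f2 a b c x"
  by (simp add: f_abc_def strongly_hyperbolic_pos)

lemma f_abc_lt_asymptote: "strongly_hyperbolic f2 \<Longrightarrow> 0 < a \<Longrightarrow> x < - b \<Longrightarrow> f_abc f1 f2 a b c x < c"
  by (simp add: f_abc_def strongly_hyperbolic_pos)

lemma concyclic_three_right_branch: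
  assumes sh1: "strongly_hyperbolic f1" and x: "x1 < x2" "x2 < x3" and y: "y3 < y2"
    and convex: "(y2 - y3) * (x2 - x1) < (y1 - y2) * (x3 - x2)"
  shows "concyclic f1 f2 {(Fin x1, Fin y1), (Fin x2, Fin y2), (Fin x3, Fin y3)}"
proof -
  define R where "R = (y1 - y2) / (y2 - y3)"
  have "x2 - x1 < (y1 - y2) * (x3 - x2) / (y2 - y3)"
    using y convex by (simp add: pos_less_divide_eq mult.commute)
  then have "x2 - x1 < R * (x3 - x2)"
    by (simp add: R_def)
  moreover have "0 < x2 - x1" "0 < x3 - x2"
    using x by simp_all
  ultimately obtain u where u: "0 < u"
    and ratio: "f1 u - f1 (u + (x2 - x1)) = R * (f1 (u + (x2 - x1)) - f1 (u + (x2 - x1) + (x3 - x2)))"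
    using strongly_hyperbolic_increment_ratio_eq[OF sh1] by blast
  define v where "v = x1 - u"
  have shift: "x1 - v = u" "x2 - v = u + (x2 - x1)" "x3 - v = u + (x2 - x1) + (x3 - x2)"
    by (simp_all add: v_def)
  define D E where "D = f1 (x1 - v) - f1 (x2 - v)" and "E = f1 (x2 - v) - f1 (x3 - v)"
  have DE: "D = R * E"
    using ratio unfolding D_def E_def shift .
  have E: "0 < E"
    using strongly_hyperbolic_decreasing[OF sh1, of "x2 - v" "x3 - v"] u x by (simp add: E_def shift)
  define a c where "a = (y2 - y3) / E" and "c = y1 - a * f1 (x1 - v)"
  have a: "0 < a"
    using E y by (simp add: a_def)
  have aE: "a * E = y2 - y3"
    using E by (simp add: a_def)
  have "a * D = R * (a * E)"
    by (simp add: DE mult_ac)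
  then have aD: "a * D = y1 - y2"
    using y by (simp add: aE R_def)
  have "a * f1 (x2 - v) + c = y2" "a * f1 (x3 - v) + c = y3"
    using aD aE by (simp_all add: c_def D_def E_def algebra_simps)
  moreover have "v < x1"
    using u by (simp add: v_def)
  ultimately have "{(Fin x1, Fin y1), (Fin x2, Fin y2), (Fin x3, Fin y3)} \<subseteq> f_abc_closure f1 f2 a (- v) c"
    using x by (simp add: f_abc_right_of_pole c_def)
  then show ?thesis
    by (rule concyclic_f_abc_closure[OF a])
qed

lemma concyclic_asymptote_two_right:
  assumes sh1: "strongly_hyperbolic f1" and x: "x1 < x2" and y: "c < y2" "y2 < y1"
  shows "concyclic f1 f2 {(Infty, Fin c), (Fin x1, Fin y1), (Fin x2, Fin y2)}"
proof -
  define r where "r = (y1 - c) / (y2 - c)"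
  have "1 < r"
    using y by (simp add: r_def)
  moreover have "0 < x2 - x1"
    using x by simp
  ultimately obtain u where u: "0 < u" and ratio: "f1 u = r * f1 (u + (x2 - x1))"
    using strongly_hyperbolic_shift_ratio_eq[OF sh1] by blast
  define v a where "v = x1 - u" and "a = (y1 - c) / f1 u"
  have fu: "0 < f1 u"
    using strongly_hyperbolic_pos[OF sh1 u] .
  have a: "0 < a"
    using fu y by (simp add: a_def)
  have shift: "x2 - v = u + (x2 - x1)"
    by (simp add: v_def)
  have "f1 (x2 - v) = f1 u / r"
    using ratio \<open>1 < r\<close> unfolding shift by simp
  then have "a * f1 (x2 - v) = y2 - c"
    using fu y by (simp add: a_def r_def)
  moreover have "a * f1 (x1 - v) = y1 - c"
    using fu by (simp add: a_def v_def)
  moreover have "v < x1"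
    using u by (simp add: v_def)
  ultimately have "{(Infty, Fin c), (Fin x1, Fin y1), (Fin x2, Fin y2)} \<subseteq> f_abc_closure f1 f2 a (- v) c"
    using x by (simp add: f_abc_right_of_pole)
  then show ?thesis
    by (rule concyclic_f_abc_closure[OF a])
qed

lemma concyclic_asymptote_left_right:
  assumes sh1: "strongly_hyperbolic f1" and sh2: "strongly_hyperbolic f2"
    and x: "x1 < x2" and y: "y1 < c" "c < y2"
  shows "concyclic f1 f2 {(Infty, Fin c), (Fin x1, Fin y1), (Fin x2, Fin y2)}"
proof -
  have "0 < x2 - x1" "0 < y2 - c" "0 < c - y1"
    using x y by simp_all
  \<comment> \<open>with \<open>\<beta> = 0\<close> the shift \<open>\<delta>\<close> is irrelevant\<close>
  then obtain t where t: "0 < t" "t < x2 - x1" and balance: "(y2 - c) * f2 t = (c - y1) * f1 (x2 - x1 - t)"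
    using strongly_hyperbolic_two_branch_eq[OF sh1 sh2, of "x2 - x1" "x2 - x1" "y2 - c" 0 "c - y1"]
    by auto
  define v a where "v = x1 + t" and "a = (c - y1) / f2 t"
  have ft: "0 < f2 t"
    using strongly_hyperbolic_pos[OF sh2 t(1)] .
  have a: "0 < a"
    using ft y by (simp add: a_def)
  have "a * f1 (x2 - v) = (c - y1) * f1 (x2 - x1 - t) / f2 t"
    by (simp add: a_def v_def diff_diff_eq)
  then have "a * f1 (x2 - v) = y2 - c"
    using ft by (simp flip: balance)
  moreover have "a * f2 (v - x1) = c - y1"
    using ft by (simp add: a_def v_def)
  moreover have "x1 < v" "v < x2"
    using t by (simp_all add: v_def)
  ultimately have "{(Infty, Fin c), (Fin x1, Fin y1), (Fin x2, Fin y2)} \<subseteq> f_abc_closure f1 f2 a (- v) c"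
    by (simp add: f_abc_right_of_pole f_abc_left_of_pole)
  then show ?thesis
    by (rule concyclic_f_abc_closure[OF a])
qed

lemma concyclic_two_left_one_right:
  assumes sh1: "strongly_hyperbolic f1" and sh2: "strongly_hyperbolic f2"
    and x: "x1 < x2" "x2 < x3" and y: "y2 < y1" "y1 < y3"
  shows "concyclic f1 f2 {(Fin x1, Fin y1), (Fin x2, Fin y2), (Fin x3, Fin y3)}"
proof -
  have "0 < x3 - x2" "0 < x2 - x1" "0 < y3 - y1" "0 \<le> y3 - y2" "0 < y1 - y2"
    using x y by simp_all
  then obtain t where t: "0 < t" "t < x3 - x2"
    and balance: "(y3 - y1) * f2 t - (y3 - y2) * f2 (t + (x2 - x1)) = (y1 - y2) * f1 (x3 - x2 - t)"
    using strongly_hyperbolic_two_branch_eq[OF sh1 sh2] by blast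
  define v where "v = x2 + t"
  define F1 F2 g where "F1 = f2 (v - x1)" and "F2 = f2 (v - x2)" and "g = f1 (x3 - v)"
  have balance': "(y3 - y1) * F2 - (y3 - y2) * F1 = (y1 - y2) * g"
    using balance by (simp add: F1_def F2_def g_def v_def algebra_simps)
  have F12: "F1 < F2"
    using strongly_hyperbolic_decreasing[OF sh2 t(1), of "v - x1"] x by (simp add: F1_def F2_def v_def)
  define a c where "a = (y1 - y2) / (F2 - F1)" and "c = y2 + a * F2"
  have a: "0 < a"
    using F12 y by (simp add: a_def)
  have "a * (F2 - F1) = y1 - y2"
    using F12 by (simp add: a_def)
  moreover have "a * (g + F2) = y3 - y2"
  proof -
    have "(y1 - y2) * (g + F2) = (y3 - y2) * (F2 - F1)"
      using balance' by (simp add: algebra_simps)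
    then have "a * (g + F2) = (y3 - y2) * (F2 - F1) / (F2 - F1)"
      by (simp add: a_def)
    then show ?thesis
      using F12 by simp
  qed
  ultimately have "c - a * F1 = y1" "a * g + c = y3"
    by (simp_all add: c_def algebra_simps)
  moreover have "x1 < v" "x2 < v" "v < x3"
    using x t by (simp_all add: v_def)
  ultimately have "{(Fin x1, Fin y1), (Fin x2, Fin y2), (Fin x3, Fin y3)} \<subseteq> f_abc_closure f1 f2 a (- v) c"
    by (simp add: f_abc_right_of_pole f_abc_left_of_pole c_def F1_def F2_def g_def)
  then show ?thesis
    by (rule concyclic_f_abc_closure[OF a])
qed

lemma concyclic_pole:
  fixes f1 f2 :: "real \<Rightarrow> real" and B :: real
  defines "g \<equiv> f_abc f1 f2 1 (- B) 0"
  assumes x: "x1 \<noteq> B" "x2 \<noteq> B" and sign: "0 < (y1 - y2) * (g x1 - g x2)"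
  shows "concyclic f1 f2 {(Fin B, Infty), (Fin x1, Fin y1), (Fin x2, Fin y2)}"
proof -
  define a c where "a = (y1 - y2) / (g x1 - g x2)" and "c = y1 - a * g x1"
  have a: "0 < a"
    using sign by (simp add: a_def zero_less_mult_iff zero_less_divide_iff)
  have "g x1 \<noteq> g x2"
    using sign by auto
  then have "a * (g x1 - g x2) = y1 - y2"
    by (simp add: a_def)
  then have "a * g x1 + c = y1" "a * g x2 + c = y2"
    by (simp_all add: c_def algebra_simps)
  then have "{(Fin B, Infty), (Fin x1, Fin y1), (Fin x2, Fin y2)} \<subseteq> f_abc_closure f1 f2 a (- B) c"
    using x unfolding g_def by (simp add: f_abc_affine[of f1 f2 a "- B" c])
  then show ?thesis
    by (rule concyclic_f_abc_closure[OF a])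
qed

lemma concyclic_pole_asymptote:
  fixes f1 f2 :: "real \<Rightarrow> real" and B :: real
  defines "g \<equiv> f_abc f1 f2 1 (- B) 0"
  assumes x: "x \<noteq> B" and sign: "0 < (y - c) * g x"
  shows "concyclic f1 f2 {(Infty, Fin c), (Fin B, Infty), (Fin x, Fin y)}"
proof -
  define a where "a = (y - c) / g x"
  have a: "0 < a"
    using sign by (simp add: a_def zero_less_mult_iff zero_less_divide_iff)
  have "g x \<noteq> 0"
    using sign by auto
  then have "a * g x + c = y"
    by (simp add: a_def)
  then have "{(Infty, Fin c), (Fin B, Infty), (Fin x, Fin y)} \<subseteq> f_abc_closure f1 f2 a (- B) c"
    using x unfolding g_def by (simp add: f_abc_affine[of f1 f2 a "- B" c])
  then show ?thesis
    by (rule concyclic_f_abc_closure[OF a])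
qed

section \<open>Orientation-reversing hyperbolas\<close>

definition hyperbola_point :: "real \<Rightarrow> real \<Rightarrow> real \<Rightarrow> real \<Rightarrow> point" where
  "hyperbola_point A B C x = (Fin x, Fin (C + A / (x - B)))"

lemma hyperbola_closure_eq:
  assumes "0 < A"
  shows "hyperbola_closure A B C = {(Infty, Fin C), (Fin B, Infty)} \<union> hyperbola_point A B C ` (- {B})"
proof -
  have "(x - B) * (y - C) = A \<longleftrightarrow> x \<noteq> B \<and> y = C + A / (x - B)" for x y
  proof (cases "x = B")
    case False
    then have "y = C + A / (x - B) \<longleftrightarrow> (y - C) * (x - B) = A"
      by (auto simp: eq_divide_eq)
    then show ?thesis
      using False by (simp add: mult.commute)
  qed (use assms in simp)
  then show ?thesis
    unfolding set_eq_iff all_point_cases by (auto simp: hyperbola_point_def image_iff)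
qed

lemma point_reflection_hyperbola_point:
  "point_reflection (hyperbola_point A B C x) = hyperbola_point A (- B) (- C) (- x)"
proof -
  have "A / (- x - - B) = - (A / (x - B))"
    by (metis minus_diff_eq divide_minus_right diff_minus_eq_add uminus_add_conv_diff)
  then show ?thesis
    unfolding hyperbola_point_def point_reflection_simps by simp
qed

lemma hyperbola_decreasing:
  fixes A B x x' :: real
  assumes "0 < A" "x < x'" "B < x \<or> x' < B"
  shows "A / (x' - B) < A / (x - B)"
proof -
  have "0 < (x' - B) * (x - B)"
    using assms(2,3) by (auto simp: zero_less_mult_iff)
  then show ?thesis
    using assms(1,2) by (intro divide_strict_left_mono) auto
qed

lemma hyperbola_value_gt_asymptote:
  fixes A B C x :: real
  assumes "0 < A" "B < x"
  shows "C < C + A / (x - B)"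
  using assms by (simp add: zero_less_divide_iff)

lemma hyperbola_value_lt_asymptote:
  fixes A B C x :: real
  assumes "0 < A" "x < B"
  shows "C + A / (x - B) < C"
  using assms by (simp add: divide_less_0_iff)

lemma reciprocal_second_difference:
  fixes A p q r :: real
  assumes "p \<noteq> 0" "q \<noteq> 0" "r \<noteq> 0"
  shows "(A / p - A / q) * (r - q) - (A / q - A / r) * (q - p) = A * (q - p) * (r - q) * (r - p) / (p * q * r)"
  using assms by (simp add: field_simps)

lemma hyperbola_right_branch_convex:
  fixes A B x1 x2 x3 :: real
  assumes "0 < A" "B < x1" "x1 < x2" "x2 < x3"
  shows "(A / (x2 - B) - A / (x3 - B)) * (x2 - x1) < (A / (x1 - B) - A / (x2 - B)) * (x3 - x2)"
proof -
  have "(A / (x1 - B) - A / (x2 - B)) * (x3 - x2) - (A / (x2 - B) - A / (x3 - B)) * (x2 - x1)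
      = A * (x2 - x1) * (x3 - x2) * (x3 - x1) / ((x1 - B) * (x2 - B) * (x3 - B))"
    using reciprocal_second_difference[of "x1 - B" "x2 - B" "x3 - B" A] assms by simp
  moreover have "0 < A * (x2 - x1) * (x3 - x2) * (x3 - x1) / ((x1 - B) * (x2 - B) * (x3 - B))"
    using assms by simp
  ultimately show ?thesis
    by linarith
qed

lemma concyclic_hyperbola_both_asymptotes:
  assumes sh1: "strongly_hyperbolic f1" and sh2: "strongly_hyperbolic f2"
    and A: "0 < A" and x: "x \<noteq> B"
  shows "concyclic f1 f2 {(Infty, Fin C), (Fin B, Infty), hyperbola_point A B C x}"
proof -
  have "0 < (C + A / (x - B) - C) * f_abc f1 f2 1 (- B) 0 x"
  proof (cases "B < x")
    case True
    then show ?thesis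
      using f_abc_gt_asymptote[OF sh1, of 1 "- B" x 0 f2] A by simp
  next
    case False
    then have "x < B"
      using x by simp
    then have "A / (x - B) * f_abc f1 f2 1 (- B) 0 x > 0"
      using f_abc_lt_asymptote[OF sh2, of 1 x "- B" f1 0] A by (intro mult_neg_neg) (simp_all add: divide_pos_neg)
    then show ?thesis
      by simp
  qed
  then show ?thesis
    using concyclic_pole_asymptote[OF x] by (simp add: hyperbola_point_def)
qed

lemma concyclic_hyperbola_pole:
  assumes sh1: "strongly_hyperbolic f1" and sh2: "strongly_hyperbolic f2"
    and A: "0 < A" and x: "x1 < x2" "x1 \<noteq> B" "x2 \<noteq> B"
  shows "concyclic f1 f2 {(Fin B, Infty), hyperbola_point A B C x1, hyperbola_point A B C x2}"
proof -
  define g where "g = f_abc f1 f2 1 (- B) 0"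
  have "0 < (A / (x1 - B) - A / (x2 - B)) * (g x1 - g x2)"
  proof -
    consider "B < x1 \<or> x2 < B" | "x1 < B" "B < x2"
      using x by linarith
    then show ?thesis
    proof cases
      case 1
      then show ?thesis
        using hyperbola_decreasing[OF A x(1)] f_abc_decreasing[OF sh1 sh2, of 1 x1 x2 "- B" 0] x(1)
        by (simp add: g_def)
    next
      case 2
      then have "A / (x1 - B) < 0" "0 < A / (x2 - B)" "g x1 < 0" "0 < g x2"
        using A f_abc_lt_asymptote[OF sh2, of 1 x1 "- B" f1 0] f_abc_gt_asymptote[OF sh1, of 1 "- B" x2 0 f2]
        by (simp_all add: g_def divide_pos_neg)
      then show ?thesis
        by (simp add: mult_neg_neg)
    qed
  qed
  then show ?thesis
    unfolding hyperbola_point_def g_def using x by (intro concyclic_pole) simp_all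
qed

lemma concyclic_hyperbola_asymptote:
  assumes sh1: "strongly_hyperbolic f1" and sh2: "strongly_hyperbolic f2"
    and A: "0 < A" and x: "x1 < x2" "x1 \<noteq> B" "x2 \<noteq> B"
  shows "concyclic f1 f2 {(Infty, Fin C), hyperbola_point A B C x1, hyperbola_point A B C x2}"
proof -
  define y1 y2 where "y1 = C + A / (x1 - B)" and "y2 = C + A / (x2 - B)"
  have dec: "y2 < y1" if "B < x1 \<or> x2 < B"
    using hyperbola_decreasing[OF A x(1) that] by (simp add: y1_def y2_def)
  have "concyclic f1 f2 {(Infty, Fin C), (Fin x1, Fin y1), (Fin x2, Fin y2)}"
  proof -
    consider "B < x1" | "x1 < B" "B < x2" | "x2 < B"
      using x by linarith
    then show ?thesis
    proof cases
      case 1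
      then have "C < y2"
        using hyperbola_value_gt_asymptote[OF A] x(1) by (simp add: y2_def)
      with 1 show ?thesis
        using dec by (intro concyclic_asymptote_two_right[OF sh1 x(1)]) auto
    next
      case 2
      then have "y1 < C" "C < y2"
        using hyperbola_value_lt_asymptote[OF A] hyperbola_value_gt_asymptote[OF A] by (simp_all add: y1_def y2_def)
      then show ?thesis
        by (rule concyclic_asymptote_left_right[OF sh1 sh2 x(1)])
    next
      case 3
      then have "y1 < C"
        using hyperbola_value_lt_asymptote[OF A] x(1) by (simp add: y1_def)
      with 3 have "concyclic f2 f1 {(Infty, Fin (- C)), (Fin (- x2), Fin (- y2)), (Fin (- x1), Fin (- y1))}"
        using dec x(1) by (intro concyclic_asymptote_two_right[OF sh2]) auto
      then have "concyclic f2 f1 (point_reflection ` {(Infty, Fin C), (Fin x1, Fin y1), (Fin x2, Fin y2)})"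
        by (simp add: insert_commute)
      then show ?thesis
        by (rule concyclic_point_reflection)
    qed
  qed
  then show ?thesis
    by (simp add: hyperbola_point_def y1_def y2_def)
qed

lemma concyclic_hyperbola_right_branch:
  assumes sh1: "strongly_hyperbolic f1" and A: "0 < A" and x: "B < x1" "x1 < x2" "x2 < x3"
  shows "concyclic f1 f2 {hyperbola_point A B C x1, hyperbola_point A B C x2, hyperbola_point A B C x3}"
proof -
  have "C + A / (x3 - B) < C + A / (x2 - B)"
    using hyperbola_decreasing[OF A x(3)] x by simp
  moreover have "(C + A / (x2 - B) - (C + A / (x3 - B))) * (x2 - x1)
      < (C + A / (x1 - B) - (C + A / (x2 - B))) * (x3 - x2)"
    using hyperbola_right_branch_convex[OF A x] by simp
  ultimately show ?thesis
    unfolding hyperbola_point_def by (rule concyclic_three_right_branch[OF sh1 x(2,3)])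
qed

lemma concyclic_hyperbola_two_left_one_right:
  assumes sh1: "strongly_hyperbolic f1" and sh2: "strongly_hyperbolic f2"
    and A: "0 < A" and x: "x1 < x2" "x2 < B" "B < x3"
  shows "concyclic f1 f2 {hyperbola_point A B C x1, hyperbola_point A B C x2, hyperbola_point A B C x3}"
proof -
  have "C + A / (x2 - B) < C + A / (x1 - B)"
    using hyperbola_decreasing[OF A x(1)] x(2) by simp
  moreover have "C + A / (x1 - B) < C" "C < C + A / (x3 - B)"
    using hyperbola_value_lt_asymptote[OF A] hyperbola_value_gt_asymptote[OF A x(3)] x(1,2) by simp_all
  moreover have "x2 < x3"
    using x by simp
  ultimately show ?thesis
    unfolding hyperbola_point_def by (intro concyclic_two_left_one_right[OF sh1 sh2 x(1)]) simp_all
qed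

lemma concyclic_hyperbola_three:
  assumes sh1: "strongly_hyperbolic f1" and sh2: "strongly_hyperbolic f2"
    and A: "0 < A" and x: "x1 < x2" "x2 < x3" "x1 \<noteq> B" "x2 \<noteq> B" "x3 \<noteq> B"
  shows "concyclic f1 f2 {hyperbola_point A B C x1, hyperbola_point A B C x2, hyperbola_point A B C x3}"
proof -
  have reflected: "concyclic f1 f2 {hyperbola_point A B C x1, hyperbola_point A B C x2, hyperbola_point A B C x3}"
    if "concyclic f2 f1 {hyperbola_point A (- B) (- C) (- x3), hyperbola_point A (- B) (- C) (- x2),
      hyperbola_point A (- B) (- C) (- x1)}"
  proof -
    have "concyclic f2 f1 (point_reflection `
        {hyperbola_point A B C x1, hyperbola_point A B C x2, hyperbola_point A B C x3})"
      using that by (simp add: point_reflection_hyperbola_point insert_commute)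
    then show ?thesis
      by (rule concyclic_point_reflection)
  qed
  consider "B < x1" | "x1 < B" "B < x2" | "x2 < B" "B < x3" | "x3 < B"
    using x by linarith
  then show ?thesis
  proof cases
    case 1
    then show ?thesis
      using x by (intro concyclic_hyperbola_right_branch[OF sh1 A])
  next
    case 2
    then show ?thesis
      using x by (intro reflected concyclic_hyperbola_two_left_one_right[OF sh2 sh1 A]) simp_all
  next
    case 3
    then show ?thesis
      using x by (intro concyclic_hyperbola_two_left_one_right[OF sh1 sh2 A])
  next
    case 4
    then show ?thesis
      using x by (intro reflected concyclic_hyperbola_right_branch[OF sh2 A]) simp_all
  qed
qed

lemma card_2_obtain_sorted:
  fixes X :: "'a::linorder set"
  assumes "card X = 2"
  obtains x1 x2 where "x1 < x2" "X = {x1, x2}"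
proof -
  have "finite X"
    using assms by (metis card.infinite zero_neq_numeral)
  then obtain xs where xs: "sorted_wrt (<) xs" "set xs = X" "length xs = 2"
    using assms by (metis finite_set_strict_sorted)
  then obtain x1 x2 where "xs = [x1, x2]"
    by (auto simp: numeral_2_eq_2 length_Suc_conv)
  with xs show ?thesis
    using that by auto
qed

lemma card_3_obtain_sorted:
  fixes X :: "'a::linorder set"
  assumes "card X = 3"
  obtains x1 x2 x3 where "x1 < x2" "x2 < x3" "X = {x1, x2, x3}"
proof -
  have "finite X"
    using assms by (metis card.infinite zero_neq_numeral)
  then obtain xs where xs: "sorted_wrt (<) xs" "set xs = X" "length xs = 3"
    using assms by (metis finite_set_strict_sorted)
  then obtain x1 x2 x3 where "xs = [x1, x2, x3]"
    by (auto simp: numeral_3_eq_3 length_Suc_conv)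
  with xs show ?thesis
    using that by auto
qed

lemma hyperbola_subset_decompose:
  assumes A: "0 < A" and S: "S \<subseteq> hyperbola_closure A B C" and fin: "finite S"
  defines "X \<equiv> {x. x \<noteq> B \<and> hyperbola_point A B C x \<in> S}"
    and "S_infty \<equiv> S \<inter> {(Infty, Fin C), (Fin B, Infty)}"
  shows "S = S_infty \<union> hyperbola_point A B C ` X" and "card S = card S_infty + card X"
proof -
  show S_eq: "S = S_infty \<union> hyperbola_point A B C ` X"
  proof
    show "S \<subseteq> S_infty \<union> hyperbola_point A B C ` X"
    proof
      fix p
      assume "p \<in> S"
      then have "p \<in> {(Infty, Fin C), (Fin B, Infty)} \<union> hyperbola_point A B C ` (- {B})"
        using S hyperbola_closure_eq[OF A] by auto
      then show "p \<in> S_infty \<union> hyperbola_point A B C ` X"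
        using \<open>p \<in> S\<close> by (auto simp: S_infty_def X_def)
    qed
  qed (auto simp: X_def S_infty_def)
  have inj: "inj (hyperbola_point A B C)"
    by (auto simp: inj_def hyperbola_point_def)
  have "finite X"
    using fin S_eq inj by (metis finite_Un finite_imageD inj_on_subset top_greatest)
  moreover have "finite S_infty"
    using fin by (simp add: S_infty_def)
  moreover have "S_infty \<inter> hyperbola_point A B C ` X = {}"
    by (auto simp: S_infty_def hyperbola_point_def)
  ultimately have "card S = card S_infty + card (hyperbola_point A B C ` X)"
    by (subst S_eq) (intro card_Un_disjoint, auto)
  then show "card S = card S_infty + card X"
    using card_image[OF inj_on_subset[OF inj subset_UNIV]] by simp
qed

lemma concyclic_hyperbola_subset:
  assumes sh1: "strongly_hyperbolic f1" and sh2: "strongly_hyperbolic f2"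
    and A: "0 < A" and S: "S \<subseteq> hyperbola_closure A B C" and card: "card S = 3"
  shows "concyclic f1 f2 S"
proof -
  define X where "X = {x. x \<noteq> B \<and> hyperbola_point A B C x \<in> S}"
  define S_infty where "S_infty = S \<inter> {(Infty, Fin C), (Fin B, Infty)}"
  have "finite S"
    using card by (metis card.infinite zero_neq_numeral)
  then have S_eq: "S = S_infty \<union> hyperbola_point A B C ` X" and card_X: "card X = 3 - card S_infty"
    using hyperbola_subset_decompose[OF A S] card unfolding X_def S_infty_def by simp_all
  have "B \<notin> X"
    by (simp add: X_def)
  consider "S_infty = {(Infty, Fin C), (Fin B, Infty)}" | "S_infty = {(Infty, Fin C)}"
    | "S_infty = {(Fin B, Infty)}" | "S_infty = {}"
    unfolding S_infty_def by blast
  then show ?thesis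
  proof cases
    case 1
    with card_X obtain x where "X = {x}"
      by (auto simp: card_1_singleton_iff)
    then have "S = {(Infty, Fin C), (Fin B, Infty), hyperbola_point A B C x}"
      using S_eq 1 by (simp add: insert_commute)
    then show ?thesis
      using concyclic_hyperbola_both_asymptotes[OF sh1 sh2 A] \<open>B \<notin> X\<close> \<open>X = {x}\<close> by simp
  next
    case 2
    with card_X obtain x1 x2 where "x1 < x2" "X = {x1, x2}"
      by (auto elim: card_2_obtain_sorted)
    moreover have "S = {(Infty, Fin C), hyperbola_point A B C x1, hyperbola_point A B C x2}"
      using S_eq 2 \<open>X = {x1, x2}\<close> by (simp add: insert_commute)
    ultimately show ?thesis
      using concyclic_hyperbola_asymptote[OF sh1 sh2 A] \<open>B \<notin> X\<close> by simp
  next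
    case 3
    with card_X obtain x1 x2 where "x1 < x2" "X = {x1, x2}"
      by (auto elim: card_2_obtain_sorted)
    moreover have "S = {(Fin B, Infty), hyperbola_point A B C x1, hyperbola_point A B C x2}"
      using S_eq 3 \<open>X = {x1, x2}\<close> by (simp add: insert_commute)
    ultimately show ?thesis
      using concyclic_hyperbola_pole[OF sh1 sh2 A] \<open>B \<notin> X\<close> by simp
  next
    case 4
    with card_X obtain x1 x2 x3 where "x1 < x2" "x2 < x3" "X = {x1, x2, x3}"
      by (auto elim: card_3_obtain_sorted)
    moreover have "S = {hyperbola_point A B C x1, hyperbola_point A B C x2, hyperbola_point A B C x3}"
      using S_eq 4 \<open>X = {x1, x2, x3}\<close> by (simp add: insert_commute)
    ultimately show ?thesis
      using concyclic_hyperbola_three[OF sh1 sh2 A] \<open>B \<notin> X\<close> by simp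
  qed
qed

theorem theorem4p2:
  fixes f1 f2 :: "real \<Rightarrow> real" and p1 p2 p3 :: point
  assumes "strongly_hyperbolic f1" and "strongly_hyperbolic f2"
    and "distinct [p1, p2, p3]"
    and "admissible_position p1 p2 p3"
  shows "\<exists>C\<in>C_minus f1 f2. {p1, p2, p3} \<subseteq> C"
proof -
  from assms(4) consider (line) s t where "s < 0" "{p1, p2, p3} \<subseteq> line_closure s t"
    | (hyperbola) A B C where "0 < A" "{p1, p2, p3} \<subseteq> hyperbola_closure A B C"
    unfolding admissible_position_def by blast
  then show ?thesis
  proof cases
    case line
    then show ?thesis
      unfolding C_minus_def by blast
  next
    case hyperbola
    moreover have "card {p1, p2, p3} = 3"
      using distinct_card[OF assms(3)] by simp
    ultimately have "concyclic f1 f2 {p1, p2, p3}"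
      using concyclic_hyperbola_subset[OF assms(1,2)] by blast
    then show ?thesis
      unfolding concyclic_def .
  qed
qed

end
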